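(* Let $B$, $\mathcal{U}=\{U_j\}_{j=1}^n$, $\{\varphi_j\}$, $q$, $\eta\in Z^1(\mathcal{N}(\mathcal{U});\mathbb{Z}_q)$ and $P_\eta$ be as below. Define $f:B\to L^n_q$ by \[ f(b)=\left[\sqrt{\varphi_1(b)}\,\zeta_q^{\eta_{j1}}:\cdots:\sqrt{\varphi_n(b)}\,\zeta_q^{\eta_{jn}}\right]\qquad\text{for } b\in U_j, \] with the convention that the $k$-th entry is $0$ if $U_j\cap U_k=\emptyset$. Then $f$ is well defined (independent of the choice of $j$ with $b\in U_j$), continuous, and classifies $P_\eta$: the principal $\mathbb{Z}_q$-bundle $P_\eta\to B$ is isomorphic to the pullback bundle $f^*(S^{2n-1})=\{(b,z)\in B\times S^{2n-1}: f(b)=p(z)\}\to B$, where $p:S^{2n-1}\to L^n_q$ is the quotient map. In particular, composing with the inclusion $L^n_q\subset L^\infty_q$, $f$ is a classifying map for $P_\eta$.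
   Context: $\zeta_q=e^{2\pi i/q}$. $\mathbb{Z}_q$ acts on $S^{2n-1}\subset\mathbb{C}^n$ by $z\cdot g=\zeta_q^g z$; the Lens space is $L^n_q=S^{2n-1}/\mathbb{Z}_q$ with quotient map $p$, and $[a_1:\cdots:a_n]$ denotes the class of $(a_1,\ldots,a_n)\in S^{2n-1}$ in $L^n_q$. $L^\infty_q=S^\infty/\mathbb{Z}_q$ similarly. $B$ is a topological space, $\mathcal{U}$ an open cover of $B$, $\{\varphi_j\}$ a partition of unity dominated by $\mathcal{U}$ (continuous $\varphi_j:B\to[0,1]$, $\sum_j\varphi_j\equiv1$, $\varphi_j=0$ outside $U_j$). The nerve $\mathcal{N}(\mathcal{U})$ has vertices $\{1,\ldots,n\}$ and simplices the index sets with nonempty common intersection. $\eta\in Z^1(\mathcal{N}(\mathcal{U});\mathbb{Z}_q)$ assigns $\eta_{jk}\in\mathbb{Z}_q$ to each ordered pair with $U_j\cap U_k\ne\emptyset$, with $\eta_{jj}=0$, $\eta_{kj}=-\eta_{jk}$, $\eta_{jk}+\eta_{kl}=\eta_{jl}$ whenever $U_j\cap U_k\cap U_l\ne\emptyset$. $P_\eta$ is the quotient of $\bigsqcup_j U_j\times\{j\}\times\mathbb{Z}_q$ by $(b,j,g)\sim(b,k,g+\eta_{jk})$ for $b\in U_j\cap U_k$, with projection $[b,j,g]\mapsto b$ and right action $[b,j,g]\cdot m=[b,j,g+m]$. Two principal $\mathbb{Z}_q$-bundles over $B$ are isomorphic if there is a $\mathbb{Z}_q$-equivariant homeomorphism of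 total spaces commuting with the projections. *)

theory Defs
  imports "HOL-Analysis.Analysis"
begin

definition qclass :: "'a topology \<Rightarrow> ('a \<Rightarrow> 'a \<Rightarrow> bool) \<Rightarrow> 'a \<Rightarrow> 'a set" where
  "qclass X r x = {y \<in> topspace X. r x y}"

definition qclasses :: "'a topology \<Rightarrow> ('a \<Rightarrow> 'a \<Rightarrow> bool) \<Rightarrow> 'a set set" where
  "qclasses X r = qclass X r ` topspace X"

definition quotient_top :: "'a topology \<Rightarrow> ('a \<Rightarrow> 'a \<Rightarrow> bool) \<Rightarrow> 'a set topology" where
  "quotient_top X r = topology (\<lambda>V. V \<subseteq> qclasses X r \<and> openin X (\<Union>V))"

definition zeta :: "nat \<Rightarrow> complex" where
  "zeta q = exp (2 * of_real pi * \<i> / of_nat q)"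

text \<open>Z_q is modelled as {0..<q} with addition mod q.\<close>

text \<open>The unit sphere S^(2n-1) in C^n, n = CARD('n).\<close>
definition sphere_top :: "(complex ^ 'n) topology" where
  "sphere_top = top_of_set (sphere 0 1)"

definition zact :: "nat \<Rightarrow> complex ^ 'n \<Rightarrow> nat \<Rightarrow> complex ^ 'n" where
  "zact q z g = (zeta q ^ g) *s z"

definition lens_rel :: "nat \<Rightarrow> complex ^ 'n \<Rightarrow> complex ^ 'n \<Rightarrow> bool" where
  "lens_rel q z w \<longleftrightarrow> (\<exists>g<q. w = zact q z g)"

definition lens_space :: "nat \<Rightarrow> (complex ^ 'n) set topology" where
  "lens_space q = quotient_top sphere_top (lens_rel q)"

definition lens_proj :: "nat \<Rightarrow> complex ^ 'n \<Rightarrow> (complex ^ 'n) set" where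
  "lens_proj q z = qclass sphere_top (lens_rel q) z"

text \<open>U is an open cover of B indexed by the finite type 'n (vertices of the nerve),
  phi a partition of unity dominated by U.\<close>
definition open_cover :: "'a topology \<Rightarrow> ('n \<Rightarrow> 'a set) \<Rightarrow> bool" where
  "open_cover B U \<longleftrightarrow> (\<forall>j. openin B (U j)) \<and> (\<Union>j. U j) = topspace B"

definition pou_dominated :: "'a topology \<Rightarrow> ('n::finite \<Rightarrow> 'a set) \<Rightarrow> ('n \<Rightarrow> 'a \<Rightarrow> real) \<Rightarrow> bool" where
  "pou_dominated B U \<phi> \<longleftrightarrow>
     (\<forall>j. continuous_map B euclideanreal (\<phi> j)) \<and>
     (\<forall>j. \<forall>b\<in>topspace B. 0 \<le> \<phi> j b \<and> \<phi> j b \<le> 1) \<and>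
     (\<forall>b\<in>topspace B. (\<Sum>j\<in>UNIV. \<phi> j b) = 1) \<and>
     (\<forall>j. \<forall>b\<in>topspace B - U j. \<phi> j b = 0)"

text \<open>A Z_q-valued 1-cocycle on the nerve of U (values in {0..<q}, defined on
  ordered pairs j,k with U j \<inter> U k nonempty; values elsewhere are irrelevant).\<close>
definition cocycle :: "nat \<Rightarrow> ('n \<Rightarrow> 'a set) \<Rightarrow> ('n \<Rightarrow> 'n \<Rightarrow> nat) \<Rightarrow> bool" where
  "cocycle q U \<eta> \<longleftrightarrow>
     (\<forall>j k. U j \<inter> U k \<noteq> {} \<longrightarrow> \<eta> j k < q) \<and>
     (\<forall>j. U j \<noteq> {} \<longrightarrow> \<eta> j j = 0) \<and>
     (\<forall>j k. U j \<inter> U k \<noteq> {} \<longrightarrow> \<eta> k j = (q - \<eta> j k) mod q) \<and>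
     (\<forall>j k l. U j \<inter> U k \<inter> U l \<noteq> {} \<longrightarrow> (\<eta> j k + \<eta> k l) mod q = \<eta> j l)"

text \<open>Disjoint union of U_j \<times> {j} \<times> Z_q, as a subspace of B \<times> 'n \<times> Z_q
  (discrete topology on the last two factors); since each U_j is open this is
  the disjoint union topology.\<close>
definition P_pre :: "'a topology \<Rightarrow> ('n \<Rightarrow> 'a set) \<Rightarrow> nat \<Rightarrow> ('a \<times> 'n \<times> nat) topology" where
  "P_pre B U q = subtopology (prod_topology B (prod_topology (discrete_topology UNIV) (discrete_topology UNIV)))
      {(b, j, g). b \<in> U j \<and> g < q}"

definition P_gen :: "('n \<Rightarrow> 'a set) \<Rightarrow> nat \<Rightarrow> ('n \<Rightarrow> 'n \<Rightarrow> nat)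
      \<Rightarrow> ('a \<times> 'n \<times> nat) \<Rightarrow> ('a \<times> 'n \<times> nat) \<Rightarrow> bool" where
  "P_gen U q \<eta> x y \<longleftrightarrow> (\<exists>b j k g. x = (b, j, g) \<and> y = (b, k, (g + \<eta> j k) mod q)
      \<and> b \<in> U j \<inter> U k \<and> g < q)"

definition P_space :: "'a topology \<Rightarrow> ('n \<Rightarrow> 'a set) \<Rightarrow> nat \<Rightarrow> ('n \<Rightarrow> 'n \<Rightarrow> nat)
      \<Rightarrow> ('a \<times> 'n \<times> nat) set topology" where
  "P_space B U q \<eta> = quotient_top (P_pre B U q) (equivclp (P_gen U q \<eta>))"

definition P_proj :: "('a \<times> 'n \<times> nat) set \<Rightarrow> 'a" where
  "P_proj c = (SOME b. \<exists>j g. (b, j, g) \<in> c)"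

definition P_act :: "nat \<Rightarrow> ('a \<times> 'n \<times> nat) set \<Rightarrow> nat \<Rightarrow> ('a \<times> 'n \<times> nat) set" where
  "P_act q c m = (\<lambda>(b, j, g). (b, j, (g + m) mod q)) ` c"

definition f_vec :: "nat \<Rightarrow> ('n \<Rightarrow> 'a set) \<Rightarrow> ('n \<Rightarrow> 'a \<Rightarrow> real) \<Rightarrow> ('n \<Rightarrow> 'n \<Rightarrow> nat)
      \<Rightarrow> 'n \<Rightarrow> 'a \<Rightarrow> complex ^ 'n" where
  "f_vec q U \<phi> \<eta> j b = (\<chi> k. if U j \<inter> U k = {} then 0
        else complex_of_real (sqrt (\<phi> k b)) * zeta q ^ (\<eta> j k))"

definition class_map :: "nat \<Rightarrow> ('n \<Rightarrow> 'a set) \<Rightarrow> ('n \<Rightarrow> 'a \<Rightarrow> real) \<Rightarrow> ('n \<Rightarrow> 'n \<Rightarrow> nat)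
      \<Rightarrow> 'a \<Rightarrow> (complex ^ 'n) set" where
  "class_map q U \<phi> \<eta> b = lens_proj q (f_vec q U \<phi> \<eta> (SOME j. b \<in> U j) b)"

definition pullback_space :: "'a topology \<Rightarrow> nat \<Rightarrow> ('a \<Rightarrow> (complex ^ 'n) set)
      \<Rightarrow> ('a \<times> (complex ^ 'n)) topology" where
  "pullback_space B q f = subtopology (prod_topology B sphere_top)
      {(b, z). b \<in> topspace B \<and> z \<in> sphere 0 1 \<and> f b = lens_proj q z}"

end

theory Submission
  imports Defs
begin

(* On the overlap of U_j and U_k the chart vectors f_j(b) and f_k(b) differ by the scalar
   zeta^(eta_jk) (this is where the cocycle condition enters), so they have the same class in the
   Lens space; the squared moduli of the entries of f_j(b) are the phi_k(b), so f_j(b) is a unit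
   vector. For the same reason the map [b,j,g] -> (b, zeta^g f_j(b)) respects the gluing relation
   of P_eta and descends to an equivariant map into the pullback. Over U_j its inverse recovers
   zeta^g as the Hermitian product of z with f_j(b); this phase is continuous and takes only the
   q values zeta^m, hence is locally constant, which makes the inverse continuous. *)

section \<open>Quotients by an equivalence relation\<close>

locale quotient_equiv =
  fixes X :: "'a topology" and r :: "'a \<Rightarrow> 'a \<Rightarrow> bool"
  assumes r_refl: "x \<in> topspace X \<Longrightarrow> r x x"
    and r_sym: "r x y \<Longrightarrow> r y x"
    and r_trans: "r x y \<Longrightarrow> r y z \<Longrightarrow> r x z"
begin

lemma qclass_self: "x \<in> topspace X \<Longrightarrow> x \<in> qclass X r x"
  by (simp add: qclass_def r_refl)

lemma qclass_subset_topspace: "qclass X r x \<subseteq> topspace X"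
  by (auto simp: qclass_def)

lemma qclass_eq: "y \<in> qclass X r x \<Longrightarrow> qclass X r y = qclass X r x"
  unfolding qclass_def using r_sym r_trans by blast

lemma qclass_eq_iff:
  "x \<in> topspace X \<Longrightarrow> y \<in> topspace X \<Longrightarrow> qclass X r x = qclass X r y \<longleftrightarrow> r x y"
  unfolding qclass_def using r_refl r_sym r_trans by blast

lemma qclass_preimage:
  assumes "V \<subseteq> qclasses X r"
  shows "{x \<in> topspace X. qclass X r x \<in> V} = \<Union>V"
proof
  show "\<Union>V \<subseteq> {x \<in> topspace X. qclass X r x \<in> V}"
  proof
    fix x assume "x \<in> \<Union>V"
    then obtain a where "qclass X r a \<in> V" "x \<in> qclass X r a"
      using assms by (auto simp: qclasses_def)
    moreover from this have "qclass X r x = qclass X r a" "x \<in> topspace X"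
      using qclass_eq qclass_subset_topspace by blast+
    ultimately show "x \<in> {x \<in> topspace X. qclass X r x \<in> V}"
      by simp
  qed
qed (use qclass_self in auto)

lemma openin_quotient_top:
  "openin (quotient_top X r) V \<longleftrightarrow> V \<subseteq> qclasses X r \<and> openin X (\<Union>V)"
proof -
  have "istopology (\<lambda>V. V \<subseteq> qclasses X r \<and> openin X (\<Union>V))"
    unfolding istopology_def
  proof (rule conjI; intro allI impI)
    fix S T assume "S \<subseteq> qclasses X r \<and> openin X (\<Union>S)" "T \<subseteq> qclasses X r \<and> openin X (\<Union>T)"
    moreover have "\<Union>(S \<inter> T) = \<Union>S \<inter> \<Union>T" if "S \<subseteq> qclasses X r" "T \<subseteq> qclasses X r"
    proof -
      have "\<Union>(S \<inter> T) = {x \<in> topspace X. qclass X r x \<in> S \<inter> T}"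
        by (rule qclass_preimage[symmetric]) (use that in blast)
      also have "\<dots> = {x \<in> topspace X. qclass X r x \<in> S} \<inter> {x \<in> topspace X. qclass X r x \<in> T}"
        by auto
      finally show ?thesis
        using that by (simp add: qclass_preimage)
    qed
    ultimately show "S \<inter> T \<subseteq> qclasses X r \<and> openin X (\<Union>(S \<inter> T))"
      by (auto simp: openin_Int)
  next
    fix K assume "\<forall>V\<in>K. V \<subseteq> qclasses X r \<and> openin X (\<Union>V)"
    moreover have "\<Union>(\<Union>K) = \<Union>(Union ` K)" by auto
    ultimately show "\<Union>K \<subseteq> qclasses X r \<and> openin X (\<Union>(\<Union>K))" by auto
  qed
  then show ?thesis
    by (simp add: quotient_top_def)
qed

lemma topspace_quotient_top: "topspace (quotient_top X r) = qclasses X r"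
proof -
  have "\<Union>(qclasses X r) = topspace X"
    using qclass_subset_topspace qclass_self by (auto simp: qclasses_def)
  then have "openin (quotient_top X r) (qclasses X r)"
    by (simp add: openin_quotient_top)
  then show ?thesis
    using openin_quotient_top openin_subset openin_topspace by blast
qed

lemma quotient_map_qclass: "quotient_map X (quotient_top X r) (qclass X r)"
  unfolding quotient_map_def
  by (simp add: topspace_quotient_top openin_quotient_top qclass_preimage)
    (simp add: qclasses_def)

lemma some_qclass_invariant:
  assumes "x \<in> topspace X" and "\<And>y. r x y \<Longrightarrow> g y = g x"
  shows "g (SOME y. y \<in> qclass X r x) = g x"
  using someI[of "\<lambda>y. y \<in> qclass X r x", OF qclass_self] assms
  by (simp add: qclass_def)

end

section \<open>Roots of unity and the Lens space\<close>

lemma zeta_power: "zeta q ^ j = exp (2 * of_real pi * \<i> * of_nat j / of_nat q)"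
  by (simp add: zeta_def exp_of_nat_mult[symmetric] mult_ac)

lemma zeta_power_eq_iff: "q > 0 \<Longrightarrow> zeta q ^ a = zeta q ^ b \<longleftrightarrow> a mod q = b mod q"
  by (simp add: zeta_power complex_root_unity_eq)

lemma zeta_power_mod: "q > 0 \<Longrightarrow> zeta q ^ (a mod q) = zeta q ^ a"
  by (simp add: zeta_power_eq_iff)

lemma zeta_power_add_mod: "q > 0 \<Longrightarrow> zeta q ^ a * zeta q ^ b = zeta q ^ ((a + b) mod q)"
  by (simp add: zeta_power_mod power_add)

lemma zeta_power_inj: "a < q \<Longrightarrow> b < q \<Longrightarrow> zeta q ^ a = zeta q ^ b \<Longrightarrow> a = b"
  by (simp add: zeta_power_eq_iff)

lemma norm_zeta_power [simp]: "norm (zeta q ^ g) = 1"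
  by (simp add: zeta_def norm_power)

definition zeta_log :: "nat \<Rightarrow> complex \<Rightarrow> nat" where
  "zeta_log q v = (THE m. m < q \<and> zeta q ^ m = v)"

lemma zeta_log_power: "m < q \<Longrightarrow> zeta_log q (zeta q ^ m) = m"
  unfolding zeta_log_def by (rule the_equality) (auto intro: zeta_power_inj)

lemma norm_vector_smult: "norm (c *s (v :: complex ^ 'n)) = norm c * norm v"
  unfolding norm_vec_def by (simp add: norm_mult L2_set_right_distrib)

lemma zeta_power_smult_in_sphere: "v \<in> sphere 0 1 \<Longrightarrow> zeta q ^ g *s v \<in> sphere 0 1"
  by (simp add: norm_vector_smult)

lemma sum_smult_cnj: "(\<Sum>k\<in>UNIV. (c *s v) $ k * cnj (v $ k)) = c * of_real (norm (v :: complex ^ 'n) ^ 2)"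
proof -
  have "norm v ^ 2 = (\<Sum>k\<in>UNIV. norm (v $ k) ^ 2)"
    by (simp add: norm_vec_def L2_set_def sum_nonneg)
  then show ?thesis
    by (simp add: sum_distrib_left complex_norm_square mult.assoc del: of_real_power)
qed

lemma quotient_equiv_lens_rel:
  assumes "q > 0" shows "quotient_equiv (sphere_top :: (complex ^ 'n) topology) (lens_rel q)"
proof
  fix x :: "complex ^ 'n"
  show "lens_rel q x x"
    unfolding lens_rel_def zact_def using assms by (intro exI[of _ 0]) simp
next
  fix x y :: "complex ^ 'n" assume "lens_rel q x y"
  then obtain g where g: "g < q" "y = zeta q ^ g *s x" by (auto simp: lens_rel_def zact_def)
  have "zeta q ^ ((q - g) mod q) * zeta q ^ g = 1"
    using assms g by (simp add: zeta_power_add_mod mod_add_left_eq)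
  then have "x = zeta q ^ ((q - g) mod q) *s y"
    using g by (simp add: vector_smult_assoc)
  then show "lens_rel q y x"
    unfolding lens_rel_def zact_def using assms by (intro exI[of _ "(q - g) mod q"]) simp
next
  fix x y z :: "complex ^ 'n" assume "lens_rel q x y" "lens_rel q y z"
  then obtain g h where "g < q" "y = zeta q ^ g *s x" "h < q" "z = zeta q ^ h *s y"
    by (auto simp: lens_rel_def zact_def)
  then have "z = zeta q ^ ((h + g) mod q) *s x"
    using assms by (simp add: vector_smult_assoc zeta_power_add_mod)
  then show "lens_rel q x z"
    unfolding lens_rel_def zact_def using assms by (intro exI[of _ "(h + g) mod q"]) simp
qed

lemma lens_proj_eq_iff:
  assumes "q > 0" "v \<in> sphere 0 1" "w \<in> sphere 0 1"
  shows "lens_proj q v = lens_proj q w \<longleftrightarrow> (\<exists>g<q. w = zeta q ^ g *s v)"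
proof -
  interpret quotient_equiv sphere_top "lens_rel q"
    using assms(1) by (rule quotient_equiv_lens_rel)
  show ?thesis
    using assms qclass_eq_iff[of v w]
    by (simp add: lens_proj_def lens_rel_def zact_def sphere_top_def)
qed

lemma lens_proj_zeta_power_smult:
  "q > 0 \<Longrightarrow> g < q \<Longrightarrow> v \<in> sphere 0 1 \<Longrightarrow> lens_proj q (zeta q ^ g *s v) = lens_proj q v"
  using lens_proj_eq_iff zeta_power_smult_in_sphere by metis

section \<open>Continuity into Euclidean spaces\<close>

lemma continuous_map_vec_lambda:
  "(\<And>i. continuous_map X euclidean (\<lambda>x. f x i))
    \<Longrightarrow> continuous_map X euclidean (\<lambda>x. (\<chi> i. f x i) :: 'b::real_normed_vector ^ 'n)"
  by (simp add: continuous_map_atin tendsto_vec_lambda)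

lemma continuous_map_vec_nth:
  "continuous_map X euclidean f
    \<Longrightarrow> continuous_map X euclidean (\<lambda>x. (f x :: 'b::real_normed_vector ^ 'n) $ i)"
  by (simp add: continuous_map_atin tendsto_vec_nth)

lemma continuous_map_mult:
  "continuous_map X euclidean f \<Longrightarrow> continuous_map X euclidean g
    \<Longrightarrow> continuous_map X euclidean (\<lambda>x. f x * g x :: 'b::real_normed_algebra)"
  by (simp add: continuous_map_atin tendsto_mult)

lemma continuous_map_cnj:
  "continuous_map X euclidean f \<Longrightarrow> continuous_map X euclidean (\<lambda>x. cnj (f x))"
  by (simp add: continuous_map_atin tendsto_cnj)

lemma continuous_map_of_real:
  "continuous_map X euclideanreal f
    \<Longrightarrow> continuous_map X euclidean (\<lambda>x. of_real (f x) :: 'b::real_normed_algebra_1)"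
  by (simp add: continuous_map_atin tendsto_of_real)

lemma continuous_map_vector_smult:
  assumes "continuous_map X euclidean f"
  shows "continuous_map X euclidean (\<lambda>x. (c::complex) *s (f x :: complex ^ 'n))"
proof -
  have "continuous_map X euclidean (\<lambda>x. (\<chi> i. c * f x $ i) :: complex ^ 'n)"
    by (intro continuous_map_vec_lambda continuous_map_mult continuous_map_vec_nth assms) simp
  moreover have "(\<lambda>x. (\<chi> i. c * f x $ i)) = (\<lambda>x. c *s f x)"
    by (simp add: vec_eq_iff fun_eq_iff)
  ultimately show ?thesis by simp
qed

lemma continuous_map_finite_range_discrete:
  fixes g :: "'a \<Rightarrow> 'b::metric_space"
  assumes "continuous_map X euclidean g" "finite R" "g \<in> topspace X \<rightarrow> R"
  shows "continuous_map X (discrete_topology UNIV) (\<lambda>x. h (g x))"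
proof -
  have "subtopology euclidean R = discrete_topology R"
    by (rule finite_t1_space_imp_discrete_topology)
      (simp_all add: assms(2) t1_space_subtopology t1_space_euclidean)
  moreover have "continuous_map X (subtopology euclidean R) g"
    using assms(1,3) by (auto simp: continuous_map_in_subtopology)
  ultimately have "continuous_map X (discrete_topology R) g"
    by simp
  moreover have "continuous_map (discrete_topology R) (discrete_topology UNIV) h"
    by (simp add: continuous_map_from_discrete_topology)
  ultimately have "continuous_map X (discrete_topology UNIV) (h \<circ> g)"
    by (rule continuous_map_compose)
  then show ?thesis
    by (simp add: o_def)
qed

section \<open>The classifying map\<close>

locale cocycle_data =
  fixes B :: "'a topology" and U :: "'n::finite \<Rightarrow> 'a set"
    and \<phi> :: "'n \<Rightarrow> 'a \<Rightarrow> real" and q :: nat and \<eta> :: "'n \<Rightarrow> 'n \<Rightarrow> nat"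
  assumes q_pos: "q > 0"
    and open_cover: "open_cover B U"
    and pou: "pou_dominated B U \<phi>"
    and cocycle: "cocycle q U \<eta>"
begin

abbreviation "fv \<equiv> f_vec q U \<phi> \<eta>"
abbreviation "f \<equiv> class_map q U \<phi> \<eta>"

lemma openin_U: "openin B (U j)"
  using open_cover by (simp add: open_cover_def)

lemma U_subset_topspace: "U j \<subseteq> topspace B"
  using openin_U openin_subset by blast

lemma in_some_U: "b \<in> topspace B \<Longrightarrow> b \<in> U (SOME j. b \<in> U j)"
  using open_cover by (auto simp: open_cover_def intro: someI)

lemma \<phi>_outside: "b \<in> topspace B \<Longrightarrow> b \<notin> U k \<Longrightarrow> \<phi> k b = 0"
  using pou by (simp add: pou_dominated_def)

lemma f_vec_transition:
  assumes b: "b \<in> U j" "b \<in> U k"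
  shows "fv j b = zeta q ^ \<eta> j k *s fv k b"
proof (subst vec_eq_iff, intro allI)
  fix l
  show "fv j b $ l = (zeta q ^ \<eta> j k *s fv k b) $ l"
  proof (cases "b \<in> U l")
    case False
    then show ?thesis
      using \<phi>_outside b U_subset_topspace by (auto simp: f_vec_def)
  next
    case True
    then have "U j \<inter> U l \<noteq> {}" "U k \<inter> U l \<noteq> {}" "U j \<inter> U k \<inter> U l \<noteq> {}"
      using b by auto
    moreover from this have "zeta q ^ \<eta> j l = zeta q ^ \<eta> j k * zeta q ^ \<eta> k l"
      using cocycle q_pos by (simp add: cocycle_def zeta_power_add_mod)
    ultimately show ?thesis
      by (simp add: f_vec_def)
  qed
qed

lemma norm_f_vec_component:
  assumes b: "b \<in> U j" shows "norm (fv j b $ k) ^ 2 = \<phi> k b"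
proof -
  have "b \<in> topspace B" using b U_subset_topspace by auto
  moreover have "b \<notin> U k" if "U j \<inter> U k = {}"
    using b that by auto
  ultimately show ?thesis
    using pou \<phi>_outside by (auto simp: f_vec_def norm_mult pou_dominated_def)
qed

lemma f_vec_in_sphere:
  assumes b: "b \<in> U j" shows "fv j b \<in> sphere 0 1"
proof -
  have "(\<Sum>k\<in>UNIV. \<phi> k b) = 1"
    using b U_subset_topspace[of j] pou unfolding pou_dominated_def by blast
  then show ?thesis
    using b by (simp add: norm_vec_def L2_set_def norm_f_vec_component)
qed

lemma lens_proj_f_vec_eq:
  assumes "b \<in> U j" "b \<in> U k"
  shows "lens_proj q (fv j b) = lens_proj q (fv k b)"
proof -
  have "\<eta> j k < q"
    using cocycle assms by (auto simp: cocycle_def)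
  then show ?thesis
    using f_vec_transition[OF assms] f_vec_in_sphere[OF assms(2)] q_pos
    by (simp add: lens_proj_zeta_power_smult)
qed

lemma class_map_eq:
  assumes "b \<in> U j" shows "f b = lens_proj q (fv j b)"
proof -
  have "b \<in> U (SOME j. b \<in> U j)"
    using assms by (rule someI)
  then show ?thesis
    unfolding class_map_def using assms by (rule lens_proj_f_vec_eq)
qed

lemma continuous_map_f_vec: "continuous_map B euclidean (fv j)"
  unfolding f_vec_def
proof (rule continuous_map_vec_lambda)
  fix k
  have "continuous_map B euclideanreal (\<phi> k)"
    using pou by (simp add: pou_dominated_def)
  then show "continuous_map B euclidean (\<lambda>b. if U j \<inter> U k = {} then 0
      else complex_of_real (sqrt (\<phi> k b)) * zeta q ^ \<eta> j k)"
    by (simp add: continuous_map_mult continuous_map_of_real continuous_map_sqrt)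
qed

lemma continuous_map_f_vec_sphere: "continuous_map (subtopology B (U j)) sphere_top (fv j)"
  unfolding sphere_top_def continuous_map_in_subtopology
  using continuous_map_from_subtopology[OF continuous_map_f_vec] f_vec_in_sphere U_subset_topspace
  by auto

lemma continuous_map_class_map: "continuous_map B (lens_space q) f"
proof (rule pasting_lemma[where I=UNIV and T=U and f="\<lambda>j b. lens_proj q (fv j b)"])
  interpret quotient_equiv sphere_top "lens_rel q"
    using q_pos by (rule quotient_equiv_lens_rel)
  fix j :: 'n
  show "openin B (U j)"
    by (rule openin_U)
  show "continuous_map (subtopology B (U j)) (lens_space q) (\<lambda>b. lens_proj q (fv j b))"
    using continuous_map_compose[OF continuous_map_f_vec_sphere
        quotient_imp_continuous_map[OF quotient_map_qclass]]
    by (simp add: o_def lens_space_def lens_proj_def)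
next
  fix i j b assume "b \<in> topspace B \<inter> U i \<inter> U j"
  then show "lens_proj q (fv i b) = lens_proj q (fv j b)"
    using lens_proj_f_vec_eq by blast
next
  fix b assume "b \<in> topspace B"
  then show "\<exists>j. j \<in> UNIV \<and> b \<in> U j \<and> f b = lens_proj q (fv j b)"
    using in_some_U class_map_eq by blast
qed

section \<open>The bundle isomorphism\<close>

abbreviation "Ppre \<equiv> P_pre B U q"
abbreviation "Prel \<equiv> equivclp (P_gen U q \<eta>)"
abbreviation "PB \<equiv> pullback_space B q f"

sublocale P: quotient_equiv Ppre Prel
  by unfold_locales (auto intro: equivclp_sym equivclp_trans)

lemma topspace_Ppre: "topspace Ppre = {(b, j, g). b \<in> topspace B \<and> b \<in> U j \<and> g < q}"
  by (auto simp: P_pre_def)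

lemma topspace_P_space: "topspace (P_space B U q \<eta>) = qclasses Ppre Prel"
  unfolding P_space_def by (rule P.topspace_quotient_top)

lemma topspace_PB:
  "topspace PB = {(b, z). b \<in> topspace B \<and> z \<in> sphere 0 1 \<and> f b = lens_proj q z}"
  by (auto simp: pullback_space_def sphere_top_def)

definition to_pullback :: "'a \<times> 'n \<times> nat \<Rightarrow> 'a \<times> (complex ^ 'n)" where
  "to_pullback x = (fst x, zeta q ^ snd (snd x) *s fv (fst (snd x)) (fst x))"

definition bundle_iso :: "('a \<times> 'n \<times> nat) set \<Rightarrow> 'a \<times> (complex ^ 'n)" where
  "bundle_iso c = to_pullback (SOME x. x \<in> c)"

lemma fst_to_pullback [simp]: "fst (to_pullback x) = fst x"
  by (simp add: to_pullback_def)

lemma to_pullback_gen: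
  assumes "P_gen U q \<eta> x y" shows "to_pullback x = to_pullback y"
proof -
  obtain b j k g where xy: "x = (b, j, g)" "y = (b, k, (g + \<eta> j k) mod q)" and b: "b \<in> U j" "b \<in> U k"
    using assms by (auto simp: P_gen_def)
  have "zeta q ^ ((g + \<eta> j k) mod q) *s fv k b = zeta q ^ g *s fv j b"
    using f_vec_transition[OF b]
    by (simp add: vector_smult_assoc zeta_power_add_mod[OF q_pos, symmetric])
  then show ?thesis
    by (simp add: xy to_pullback_def)
qed

lemma to_pullback_equiv: "Prel x y \<Longrightarrow> to_pullback x = to_pullback y"
  by (induction rule: equivclp_induct) (auto dest: to_pullback_gen)

lemma bundle_iso_qclass: "x \<in> topspace Ppre \<Longrightarrow> bundle_iso (qclass Ppre Prel x) = to_pullback x"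
  unfolding bundle_iso_def by (rule P.some_qclass_invariant) (auto dest: to_pullback_equiv)

lemma P_proj_qclass:
  assumes x: "x \<in> topspace Ppre" shows "P_proj (qclass Ppre Prel x) = fst x"
  unfolding P_proj_def
proof (rule some_equality)
  show "\<exists>j g. (fst x, j, g) \<in> qclass Ppre Prel x"
    using P.qclass_self[OF x] by (cases x) auto
next
  fix b assume "\<exists>j g. (b, j, g) \<in> qclass Ppre Prel x"
  then obtain j g where "Prel x (b, j, g)"
    by (auto simp: qclass_def)
  then have "fst (to_pullback x) = fst (to_pullback (b, j, g))"
    by (simp only: to_pullback_equiv)
  then show "b = fst x"
    by simp
qed

lemma to_pullback_in_PB:
  assumes "x \<in> topspace Ppre" shows "to_pullback x \<in> topspace PB"
proof -
  obtain b j g where x: "x = (b, j, g)" "b \<in> topspace B" "b \<in> U j" "g < q"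
    using assms by (auto simp: topspace_Ppre)
  have "fv j b \<in> sphere 0 1"
    using x(3) by (rule f_vec_in_sphere)
  moreover from this have "f b = lens_proj q (zeta q ^ g *s fv j b)"
    using class_map_eq[OF x(3)] lens_proj_zeta_power_smult[OF q_pos x(4)] by metis
  ultimately show ?thesis
    using x(1,2) by (simp add: topspace_PB to_pullback_def norm_vector_smult)
qed

lemma continuous_map_fst_Ppre: "continuous_map Ppre B fst"
  unfolding P_pre_def by (rule continuous_map_from_subtopology[OF continuous_map_fst])

lemma openin_Ppre_sheet: "openin Ppre {x \<in> topspace Ppre. snd x = i}"
proof -
  have "openin (prod_topology (discrete_topology UNIV) (discrete_topology UNIV)) ({fst i} \<times> {snd i})"
    by (simp only: openin_prod_Times_iff) simp
  then have "openin (prod_topology B (prod_topology (discrete_topology UNIV) (discrete_topology UNIV)))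
          (topspace B \<times> ({fst i} \<times> {snd i}))"
    by (simp only: openin_prod_Times_iff) simp
  then have "openin Ppre ((topspace B \<times> ({fst i} \<times> {snd i})) \<inter> {(b, j, g). b \<in> U j \<and> g < q})"
    unfolding P_pre_def by (rule openin_subtopology_Int)
  moreover have "(topspace B \<times> ({fst i} \<times> {snd i})) \<inter> {(b, j, g). b \<in> U j \<and> g < q}
      = {x \<in> topspace Ppre. snd x = i}"
    by (auto simp: topspace_Ppre)
  ultimately show ?thesis
    by simp
qed

lemma continuous_map_snd_to_pullback: "continuous_map Ppre euclidean (\<lambda>x. snd (to_pullback x))"
proof (rule pasting_lemma[where I=UNIV and T="\<lambda>i. {x \<in> topspace Ppre. snd x = i}"
      and f="\<lambda>i x. zeta q ^ snd i *s fv (fst i) (fst x)"])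
  fix i :: "'n \<times> nat"
  show "openin Ppre {x \<in> topspace Ppre. snd x = i}"
    by (rule openin_Ppre_sheet)
  show "continuous_map (subtopology Ppre {x \<in> topspace Ppre. snd x = i}) euclidean
      (\<lambda>x. zeta q ^ snd i *s fv (fst i) (fst x))"
    using continuous_map_compose[OF continuous_map_fst_Ppre continuous_map_f_vec]
    by (intro continuous_map_from_subtopology[where X=Ppre] continuous_map_vector_smult) (simp add: o_def)
next
  fix i j x assume "x \<in> topspace Ppre \<inter> {x \<in> topspace Ppre. snd x = i} \<inter> {x \<in> topspace Ppre. snd x = j}"
  then show "zeta q ^ snd i *s fv (fst i) (fst x) = zeta q ^ snd j *s fv (fst j) (fst x)"
    by auto
next
  fix x assume "x \<in> topspace Ppre"
  moreover have "snd (to_pullback x) = zeta q ^ snd (snd x) *s fv (fst (snd x)) (fst x)"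
    by (simp add: to_pullback_def)
  ultimately show "\<exists>i. i \<in> UNIV \<and> x \<in> {x \<in> topspace Ppre. snd x = i}
      \<and> snd (to_pullback x) = zeta q ^ snd i *s fv (fst i) (fst x)"
    by blast
qed

lemma continuous_map_to_pullback: "continuous_map Ppre PB to_pullback"
proof -
  have "snd (to_pullback x) \<in> sphere 0 1" if "x \<in> topspace Ppre" for x
    using to_pullback_in_PB[OF that] by (cases "to_pullback x") (simp add: topspace_PB)
  then have "continuous_map Ppre sphere_top (\<lambda>x. snd (to_pullback x))"
    using continuous_map_snd_to_pullback
    by (simp add: sphere_top_def continuous_map_in_subtopology image_subset_iff)
  then have "continuous_map Ppre (prod_topology B sphere_top) (\<lambda>x. (fst x, snd (to_pullback x)))"
    using continuous_map_fst_Ppre by (simp add: continuous_map_paired)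
  moreover have "(\<lambda>x. (fst x, snd (to_pullback x))) = to_pullback"
    by (simp add: fun_eq_iff prod_eq_iff)
  moreover have "to_pullback ` topspace Ppre \<subseteq> topspace PB"
    using to_pullback_in_PB by blast
  ultimately show ?thesis
    unfolding pullback_space_def continuous_map_in_subtopology
    by (simp add: image_subset_iff_funcset)
qed

lemma continuous_map_bundle_iso: "continuous_map (P_space B U q \<eta>) PB bundle_iso"
  unfolding P_space_def
proof (rule continuous_compose_quotient_map[OF P.quotient_map_qclass])
  show "continuous_map Ppre PB (bundle_iso \<circ> qclass Ppre Prel)"
    using continuous_map_to_pullback by (rule continuous_map_eq) (simp add: bundle_iso_qclass)
qed

lemma to_pullback_shift:
  "to_pullback (b, j, (g + m) mod q) = (b, zact q (snd (to_pullback (b, j, g))) m)"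
  using zeta_power_add_mod[OF q_pos, of m g]
  by (simp add: to_pullback_def zact_def vector_smult_assoc add.commute[of g m])

lemma bundle_iso_P_act:
  assumes "c \<in> topspace (P_space B U q \<eta>)"
  shows "bundle_iso (P_act q c m) = (fst (bundle_iso c), zact q (snd (bundle_iso c)) m)"
proof -
  obtain x where x: "x \<in> topspace Ppre" "c = qclass Ppre Prel x"
    using assms by (auto simp: topspace_P_space qclasses_def)
  let ?shift = "\<lambda>(b, j, g). (b, j, (g + m) mod q)"
  have "\<exists>y. y \<in> ?shift ` c"
    using x P.qclass_self by blast
  then obtain x' where "x' \<in> c" "(SOME y. y \<in> ?shift ` c) = ?shift x'"
    by (metis (no_types, lifting) imageE someI)
  moreover obtain b j g where "x' = (b, j, g)"
    by (cases x')
  ultimately have x': "(b, j, g) \<in> c" "(SOME y. y \<in> ?shift ` c) = (b, j, (g + m) mod q)"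
    by simp_all
  have c_rep: "to_pullback (b, j, g) = bundle_iso c"
  proof -
    have "Prel x (b, j, g)"
      using x x' by (simp add: qclass_def)
    then show ?thesis
      using x by (simp add: bundle_iso_qclass to_pullback_equiv)
  qed
  have "bundle_iso (P_act q c m) = to_pullback (b, j, (g + m) mod q)"
    unfolding bundle_iso_def P_act_def using x'(2) by simp
  also have "\<dots> = (b, zact q (snd (to_pullback (b, j, g))) m)"
    by (rule to_pullback_shift)
  also have "\<dots> = (fst (bundle_iso c), zact q (snd (bundle_iso c)) m)"
    by (simp flip: c_rep)
  finally show ?thesis .
qed

lemma fst_bundle_iso:
  assumes "c \<in> topspace (P_space B U q \<eta>)" shows "fst (bundle_iso c) = P_proj c"
proof -
  obtain x where "x \<in> topspace Ppre" "c = qclass Ppre Prel x"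
    using assms by (auto simp: topspace_P_space qclasses_def)
  then show ?thesis
    by (simp add: bundle_iso_qclass P_proj_qclass)
qed

lemma pullback_point_in_chart:
  assumes "y \<in> topspace PB" "fst y \<in> U j"
  obtains m where "m < q" "y = to_pullback (fst y, j, m)"
proof -
  obtain b z where y: "y = (b, z)" "b \<in> U j" "z \<in> sphere 0 1" "f b = lens_proj q z"
    using assms by (cases y) (auto simp: topspace_PB)
  then have "lens_proj q (fv j b) = lens_proj q z"
    by (simp add: class_map_eq)
  then obtain m where "m < q" "z = zeta q ^ m *s fv j b"
    using lens_proj_eq_iff[OF q_pos f_vec_in_sphere[OF y(2)] y(3)] by blast
  with y(1) show thesis
    by (intro that[of m]) (simp_all add: to_pullback_def)
qed

lemma to_pullback_chart_change:
  assumes "x \<in> topspace Ppre" "fst x \<in> U j"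
  obtains m where "m < q" "Prel x (fst x, j, m)"
proof -
  obtain b k g where x: "x = (b, k, g)" "b \<in> U k" "g < q"
    using assms by (auto simp: topspace_Ppre)
  then have "P_gen U q \<eta> x (b, j, (g + \<eta> k j) mod q)"
    using assms by (auto simp: P_gen_def)
  then have "Prel x (b, j, (g + \<eta> k j) mod q)"
    by (rule r_into_equivclp)
  then show thesis
    using x(1) q_pos by (intro that) simp_all
qed

definition chart_phase :: "'n \<Rightarrow> 'a \<times> (complex ^ 'n) \<Rightarrow> complex" where
  "chart_phase j y = (\<Sum>k\<in>UNIV. snd y $ k * cnj (fv j (fst y) $ k))"

definition from_pullback_on :: "'n \<Rightarrow> 'a \<times> (complex ^ 'n) \<Rightarrow> ('a \<times> 'n \<times> nat) set" where
  "from_pullback_on j y = qclass Ppre Prel (fst y, j, zeta_log q (chart_phase j y))"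

definition bundle_iso_inv :: "'a \<times> (complex ^ 'n) \<Rightarrow> ('a \<times> 'n \<times> nat) set" where
  "bundle_iso_inv y = from_pullback_on (SOME j. fst y \<in> U j) y"

lemma chart_phase_to_pullback:
  assumes "b \<in> U j" shows "chart_phase j (to_pullback (b, j, m)) = zeta q ^ m"
proof -
  have "norm (fv j b) = 1"
    using f_vec_in_sphere[OF assms] by simp
  then show ?thesis
    unfolding chart_phase_def to_pullback_def fst_conv snd_conv sum_smult_cnj by simp
qed

lemma from_pullback_on_to_pullback:
  assumes x: "x \<in> topspace Ppre" and j: "fst x \<in> U j"
  shows "from_pullback_on j (to_pullback x) = qclass Ppre Prel x"
proof -
  obtain m where m: "m < q" "Prel x (fst x, j, m)"
    using to_pullback_chart_change[OF assms] .
  have x': "(fst x, j, m) \<in> topspace Ppre"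
    using x j m(1) by (auto simp: topspace_Ppre)
  have "to_pullback x = to_pullback (fst x, j, m)"
    using m(2) by (rule to_pullback_equiv)
  moreover have "qclass Ppre Prel (fst x, j, m) = qclass Ppre Prel x"
    using P.qclass_eq_iff[OF x' x] P.r_sym[OF m(2)] by simp
  ultimately show ?thesis
    using j m(1) by (simp add: from_pullback_on_def chart_phase_to_pullback zeta_log_power)
qed

lemma continuous_map_fst_PB: "continuous_map PB B fst"
  unfolding pullback_space_def by (rule continuous_map_from_subtopology[OF continuous_map_fst])

lemma continuous_map_chart_phase: "continuous_map PB euclidean (chart_phase j)"
proof -
  have "continuous_map PB sphere_top snd"
    unfolding pullback_space_def by (rule continuous_map_from_subtopology[OF continuous_map_snd])
  then have "continuous_map PB euclidean snd"
    unfolding sphere_top_def by (rule continuous_map_into_fulltopology)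
  moreover have "continuous_map PB euclidean (\<lambda>y. fv j (fst y))"
    using continuous_map_compose[OF continuous_map_fst_PB continuous_map_f_vec] by (simp add: o_def)
  ultimately have "continuous_map PB euclidean (\<lambda>y. snd y $ k * cnj (fv j (fst y) $ k))" for k
    by (intro continuous_map_mult continuous_map_cnj continuous_map_vec_nth) auto
  then show ?thesis
    unfolding chart_phase_def[abs_def] by (simp add: continuous_map_sum)
qed

lemma chart_phase_in_chart:
  assumes "y \<in> topspace PB" "fst y \<in> U j"
  obtains m where "m < q" "chart_phase j y = zeta q ^ m"
proof -
  obtain m where m: "m < q" "y = to_pullback (fst y, j, m)"
    using pullback_point_in_chart[OF assms] .
  then show thesis
    using that chart_phase_to_pullback[OF assms(2), of m] by (simp flip: m(2))
qed

lemma continuous_map_from_pullback_on: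
  "continuous_map (subtopology PB {y \<in> topspace PB. fst y \<in> U j}) (P_space B U q \<eta>)
     (from_pullback_on j)"
proof -
  define T where "T = {y \<in> topspace PB. fst y \<in> U j}"
  have T: "topspace (subtopology PB T) = T" "\<And>y. y \<in> T \<Longrightarrow> y \<in> topspace PB \<and> fst y \<in> U j"
    by (auto simp: T_def)
  have phase: "chart_phase j y \<in> (\<lambda>m. zeta q ^ m) ` {..<q} \<and> zeta_log q (chart_phase j y) < q"
    if y: "y \<in> T" for y
  proof -
    obtain m where "m < q" "chart_phase j y = zeta q ^ m"
      using T(2)[OF y] chart_phase_in_chart by blast
    then show ?thesis
      by (simp add: zeta_log_power)
  qed
  moreover have "continuous_map (subtopology PB T) euclidean (chart_phase j)"
    using continuous_map_chart_phase by (rule continuous_map_from_subtopology)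
  ultimately have "continuous_map (subtopology PB T) (discrete_topology UNIV)
      (\<lambda>y. zeta_log q (chart_phase j y))"
    by (intro continuous_map_finite_range_discrete[where R="(\<lambda>m. zeta q ^ m) ` {..<q}"]) (auto simp: T(1))
  moreover have "continuous_map (subtopology PB T) B fst"
    using continuous_map_fst_PB by (rule continuous_map_from_subtopology)
  ultimately have "continuous_map (subtopology PB T)
      (prod_topology B (prod_topology (discrete_topology UNIV) (discrete_topology UNIV)))
      (\<lambda>y. (fst y, j, zeta_log q (chart_phase j y)))"
    by (simp add: continuous_map_paired)
  then have "continuous_map (subtopology PB T) Ppre (\<lambda>y. (fst y, j, zeta_log q (chart_phase j y)))"
    unfolding P_pre_def continuous_map_in_subtopology T(1)
    using phase T(2) by auto
  from continuous_map_compose[OF this quotient_imp_continuous_map[OF P.quotient_map_qclass]]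
  show ?thesis
    by (simp add: T_def P_space_def o_def from_pullback_on_def[abs_def])
qed

lemma from_pullback_on_eq:
  assumes "y \<in> topspace PB" "fst y \<in> U l" "fst y \<in> U k" "m < q" "y = to_pullback (fst y, k, m)"
  shows "from_pullback_on l y = qclass Ppre Prel (fst y, k, m)"
proof -
  have "(fst y, k, m) \<in> topspace Ppre"
    using assms U_subset_topspace by (auto simp: topspace_Ppre)
  then show ?thesis
    using from_pullback_on_to_pullback[of "(fst y, k, m)" l] assms(2) by (simp flip: assms(5))
qed

lemma continuous_map_bundle_iso_inv: "continuous_map PB (P_space B U q \<eta>) bundle_iso_inv"
proof (rule pasting_lemma[where I=UNIV and T="\<lambda>j. {y \<in> topspace PB. fst y \<in> U j}"
      and f=from_pullback_on])
  fix j :: 'n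
  show "openin PB {y \<in> topspace PB. fst y \<in> U j}"
    using continuous_map_fst_PB openin_U by (rule openin_continuous_map_preimage)
next
  fix i k y assume "y \<in> topspace PB \<inter> {y \<in> topspace PB. fst y \<in> U i} \<inter> {y \<in> topspace PB. fst y \<in> U k}"
  then have y: "y \<in> topspace PB" "fst y \<in> U i" "fst y \<in> U k"
    by auto
  obtain m where "m < q" "y = to_pullback (fst y, k, m)"
    using pullback_point_in_chart[OF y(1,3)] .
  then show "from_pullback_on i y = from_pullback_on k y"
    using from_pullback_on_eq[OF y(1,2,3)] from_pullback_on_eq[OF y(1,3,3)] by simp
next
  fix y assume "y \<in> topspace PB"
  then have "fst y \<in> U (SOME j. fst y \<in> U j)"
    using in_some_U by (auto simp: topspace_PB)
  with \<open>y \<in> topspace PB\<close>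
  show "\<exists>j. j \<in> UNIV \<and> y \<in> {y \<in> topspace PB. fst y \<in> U j} \<and> bundle_iso_inv y = from_pullback_on j y"
    unfolding bundle_iso_inv_def by blast
qed (rule continuous_map_from_pullback_on)

lemma bundle_iso_inv_bundle_iso:
  assumes "c \<in> topspace (P_space B U q \<eta>)" shows "bundle_iso_inv (bundle_iso c) = c"
proof -
  obtain x where x: "x \<in> topspace Ppre" "c = qclass Ppre Prel x"
    using assms by (auto simp: topspace_P_space qclasses_def)
  then have "fst x \<in> U (SOME j. fst x \<in> U j)"
    using in_some_U by (auto simp: topspace_Ppre)
  then show ?thesis
    using from_pullback_on_to_pullback[OF x(1)] x
    by (simp add: bundle_iso_qclass bundle_iso_inv_def)
qed

lemma bundle_iso_bundle_iso_inv:
  assumes y: "y \<in> topspace PB" shows "bundle_iso (bundle_iso_inv y) = y"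
proof -
  define j where "j = (SOME j. fst y \<in> U j)"
  have j: "fst y \<in> U j"
    using y in_some_U by (auto simp: j_def topspace_PB)
  obtain m where m: "m < q" "y = to_pullback (fst y, j, m)"
    using pullback_point_in_chart[OF y j] .
  have "(fst y, j, m) \<in> topspace Ppre"
    using j m U_subset_topspace by (auto simp: topspace_Ppre)
  moreover have "bundle_iso_inv y = qclass Ppre Prel (fst y, j, m)"
    using from_pullback_on_eq[OF y j j m] by (simp add: bundle_iso_inv_def j_def)
  ultimately show ?thesis
    by (simp add: bundle_iso_qclass flip: m(2))
qed

lemma homeomorphic_map_bundle_iso: "homeomorphic_map (P_space B U q \<eta>) PB bundle_iso"
  by (rule homeomorphic_maps_imp_map[where g=bundle_iso_inv])
    (simp add: homeomorphic_maps_def continuous_map_bundle_iso continuous_map_bundle_iso_inv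
      bundle_iso_inv_bundle_iso bundle_iso_bundle_iso_inv)

end

theorem mainTheorem2:
  fixes B :: "'a topology" and U :: "'n::finite \<Rightarrow> 'a set"
    and \<phi> :: "'n \<Rightarrow> 'a \<Rightarrow> real" and q :: nat and \<eta> :: "'n \<Rightarrow> 'n \<Rightarrow> nat"
  assumes "q > 0"
    and "open_cover B U"
    and "pou_dominated B U \<phi>"
    and "cocycle q U \<eta>"
  defines "f \<equiv> class_map q U \<phi> \<eta>"
  shows "(\<forall>j k b. b \<in> U j \<inter> U k \<longrightarrow>
            lens_proj q (f_vec q U \<phi> \<eta> j b) = lens_proj q (f_vec q U \<phi> \<eta> k b))
       \<and> (\<forall>j. \<forall>b\<in>U j. f_vec q U \<phi> \<eta> j b \<in> sphere 0 1)
       \<and> continuous_map B (lens_space q) f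
       \<and> (\<exists>h. homeomorphic_map (P_space B U q \<eta>) (pullback_space B q f) h
              \<and> (\<forall>c\<in>topspace (P_space B U q \<eta>). fst (h c) = P_proj c)
              \<and> (\<forall>c\<in>topspace (P_space B U q \<eta>). \<forall>m<q.
                    h (P_act q c m) = (fst (h c), zact q (snd (h c)) m)))"
proof -
  interpret cocycle_data B U \<phi> q \<eta>
    using assms by unfold_locales
  show ?thesis
    unfolding f_def
  proof (intro conjI allI impI ballI exI[of _ bundle_iso])
    show "lens_proj q (f_vec q U \<phi> \<eta> j b) = lens_proj q (f_vec q U \<phi> \<eta> k b)"
      if "b \<in> U j \<inter> U k" for j k b
      using that lens_proj_f_vec_eq by blast
    show "f_vec q U \<phi> \<eta> j b \<in> sphere 0 1" if "b \<in> U j" for j b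
      using that by (rule f_vec_in_sphere)
  qed (simp_all add: continuous_map_class_map homeomorphic_map_bundle_iso
      fst_bundle_iso bundle_iso_P_act)
qed

end
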